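(* For all $f\in\mathbb{F}_2[x]\setminus\{0\}$ it holds that $\tau(f)\le 2\deg(f)^{1.5}+1$.
   Context: Define $T:\mathbb{F}_2[x]\to\mathbb{F}_2[x]$ by $T(f)=\frac{f}{x+1}$ if $f(1)=0$ and $T(f)=\frac{xf+1}{x+1}$ if $f(1)=1$. For nonzero $f$, $\tau(f)$ is the least $k\in\mathbb{N}$ with $T^k(f)=1$. *)

theory Defs
  imports "HOL-Computational_Algebra.Polynomial" "HOL-Library.Z2" Complex_Main
begin

text \<open>Polynomials over F_2 are modelled as bit poly (bit is the two-element field).\<close>

definition T_map :: "bit poly \<Rightarrow> bit poly" where
  "T_map f = (if poly f 1 = 0 then f div [:1, 1:]
              else ([:0, 1:] * f + 1) div [:1, 1:])"

definition tau :: "bit poly \<Rightarrow> nat" where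
  "tau f = (LEAST k. (T_map ^^ k) f = 1)"

end

theory Submission
  imports Defs
begin

text \<open>
  Substituting \<open>x + 1\<close> for \<open>x\<close> conjugates \<open>T\<close> to the map that sends \<open>h\<close> to \<open>h / x\<close> if
  \<open>h(0) = 0\<close> and to \<open>((1 + x) h + 1) / x\<close> otherwise. Hence the orbit of \<open>g = f(x + 1)\<close>, of
  degree \<open>d\<close>, walks through the array whose entry in row \<open>e\<close> and column \<open>c\<close> is the
  coefficient of \<open>x\<^sup>e\<^sup>+\<^sup>c\<close> in \<open>(1 + x)\<^sup>c g\<close>: it moves right while it reads a 1 and down one row when
  it reads a 0, until it reaches row \<open>d\<close>. So \<open>\<tau>(f) \<le> d + \<Sum> k\<^sub>e\<close>, where \<open>k\<^sub>e\<close> is the length of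
  the run of ones traversed in row \<open>e\<close>.

  Over \<open>\<bbbF>\<^sub>2\<close> the array is Pascal's triangle: row \<open>d\<close> consists of ones, and the columns are
  periodic with period a power of two \<open>P \<in> (d, 2d]\<close> because \<open>(1 + x)\<^sup>P = 1 + x\<^sup>P\<close>. A run
  of \<open>k\<close> ones forces a triangle of zeros below it, so \<open>k\<^sub>e \<le> d - e\<close>, and these triangles are
  disjoint modulo the period; counting cells gives \<open>\<Sum> k\<^sub>e (k\<^sub>e + 1) \<le> 2 P d \<le> 4 d\<^sup>2\<close>.
  Maximising \<open>\<Sum> k\<^sub>e\<close> under these two constraints by a Lagrange multiplier \<open>a \<approx> 2 \<surd>d\<close>
  yields \<open>\<Sum> k\<^sub>e \<le> 2 d\<^sup>3\<^sup>/\<^sup>2 + 1 - d\<close>.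
\<close>

section \<open>Characteristic two\<close>

lemma bit_add_self: "(x :: bit) + x = 0"
  by (cases x) simp_all

lemma bit_poly_add_self [simp]: "(p :: bit poly) + p = 0"
  by (rule poly_eqI) (simp only: coeff_add bit_add_self coeff_0)

lemma bit_lead_coeff: "(g :: bit poly) \<noteq> 0 \<Longrightarrow> lead_coeff g = 1"
  by (metis bit_not_zero_iff leading_coeff_neq_0)

lemma bit_poly_two [simp]: "(2 :: bit poly) = 0"
  by (metis bit_poly_add_self one_add_one)

lemma bit_poly_add_power2: "((p :: bit poly) + q) ^ 2 = p ^ 2 + q ^ 2"
  by (simp add: power2_sum)

lemma X_plus_1_power_two_power: "([:1, 1:] :: bit poly) ^ (2 ^ t) = 1 + monom 1 (2 ^ t)"
proof (induction t)
  case 0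
  show ?case by (simp add: monom_Suc one_pCons)
next
  case (Suc t)
  have "([:1, 1:] :: bit poly) ^ (2 ^ Suc t) = (1 + monom 1 (2 ^ t)) ^ 2"
    by (simp flip: Suc.IH power_mult add: mult.commute)
  also have "\<dots> = 1 + monom 1 (2 ^ Suc t)"
    by (simp only: bit_poly_add_power2) (simp add: power2_eq_square mult_monom mult_2)
  finally show ?case .
qed

section \<open>Conjugating by the substitution x := x + 1\<close>

definition subst_X_plus_1 :: "bit poly \<Rightarrow> bit poly" where
  "subst_X_plus_1 f = f \<circ>\<^sub>p [:1, 1:]"

lemma subst_X_plus_1_involution [simp]: "subst_X_plus_1 (subst_X_plus_1 f) = f"
proof -
  have "[:1, 1:] \<circ>\<^sub>p [:1, 1:] = ([:0, 1:] :: bit poly)"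
    by (simp add: pcompose_pCons one_pCons)
  thus ?thesis unfolding subst_X_plus_1_def by (simp flip: pcompose_assoc add: pcompose_idR)
qed

lemma subst_X_plus_1_eq_iff [simp]: "subst_X_plus_1 p = subst_X_plus_1 q \<longleftrightarrow> p = q"
  by (metis subst_X_plus_1_involution)

lemma subst_X_plus_1_const [simp]: "subst_X_plus_1 0 = 0" "subst_X_plus_1 1 = 1"
  by (simp_all add: subst_X_plus_1_def pcompose_1)

lemma subst_X_plus_1_eq_0_iff [simp]: "subst_X_plus_1 f = 0 \<longleftrightarrow> f = 0"
  using subst_X_plus_1_eq_iff[of f 0] by simp

lemma subst_X_plus_1_add: "subst_X_plus_1 (p + q) = subst_X_plus_1 p + subst_X_plus_1 q"
  by (simp add: subst_X_plus_1_def pcompose_add)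

lemma subst_X_plus_1_mult: "subst_X_plus_1 (p * q) = subst_X_plus_1 p * subst_X_plus_1 q"
  by (simp add: subst_X_plus_1_def pcompose_mult)

lemma subst_X_plus_1_X [simp]: "subst_X_plus_1 [:0, 1:] = [:1, 1:]"
  by (simp add: subst_X_plus_1_def pcompose_pCons)

lemma subst_X_plus_1_X_plus_1 [simp]: "subst_X_plus_1 [:1, 1:] = [:0, 1:]"
  by (simp add: subst_X_plus_1_def pcompose_pCons one_pCons)

lemma degree_subst_X_plus_1 [simp]: "degree (subst_X_plus_1 f) = degree f"
  by (simp add: subst_X_plus_1_def degree_pcompose)

lemma coeff_0_subst_X_plus_1: "coeff (subst_X_plus_1 f) 0 = poly f 1"
  by (simp add: subst_X_plus_1_def poly_pcompose flip: poly_0_coeff_0)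

definition pascal_step :: "'a::comm_ring_1 poly \<Rightarrow> 'a poly" where
  "pascal_step h = poly_shift 1 ([:1, 1:] * h)"

lemma coeff_pascal_step: "coeff (pascal_step h) i = coeff h i + coeff h (Suc i)"
  by (simp add: pascal_step_def coeff_poly_shift coeff_pCons)

text \<open>For \<open>h(0) = 1\<close> the constant term of \<open>(1 + x) h\<close> is 1, so \<open>((1 + x) h + 1) / x\<close> is
  \<open>pascal_step h\<close>.\<close>

definition T_conj :: "bit poly \<Rightarrow> bit poly" where
  "T_conj h = (if coeff h 0 = 0 then poly_shift 1 h else pascal_step h)"

lemma poly_shift_Suc_0_pCons [simp]: "poly_shift (Suc 0) (pCons a q) = q"
  by (rule poly_eqI) (simp add: coeff_poly_shift)

lemma X_plus_1_dvd: "poly (p :: bit poly) 1 = 0 \<Longrightarrow> [:1, 1:] dvd p"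
  using poly_eq_0_iff_dvd[of p 1] by simp

lemma subst_X_plus_1_T_map: "subst_X_plus_1 (T_map f) = T_conj (subst_X_plus_1 f)"
proof (cases "poly f 1 = 0")
  case True
  then obtain q where q: "f = [:1, 1:] * q" using X_plus_1_dvd by blast
  have "T_map f = f div [:1, 1:]" unfolding T_map_def using True by simp
  also have "\<dots> = q" unfolding q by (rule nonzero_mult_div_cancel_left) simp
  finally have "T_map f = q" .
  moreover have "subst_X_plus_1 f = [:0, 1:] * subst_X_plus_1 q"
    by (simp only: q subst_X_plus_1_mult subst_X_plus_1_X_plus_1)
  ultimately show ?thesis using True by (simp add: T_conj_def coeff_0_subst_X_plus_1)
next
  case False
  then have "poly ([:0, 1:] * f + 1) 1 = 0" by simp
  then obtain q where q: "[:0, 1:] * f + 1 = [:1, 1:] * q" using X_plus_1_dvd by blast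
  have "T_map f = ([:0, 1:] * f + 1) div [:1, 1:]" unfolding T_map_def using False by simp
  also have "\<dots> = q" unfolding q by (rule nonzero_mult_div_cancel_left) simp
  finally have "T_map f = q" .
  have "subst_X_plus_1 ([:0, 1:] * f + 1) = subst_X_plus_1 ([:1, 1:] * q)" by (simp only: q)
  then have q': "[:1, 1:] * subst_X_plus_1 f + 1 = [:0, 1:] * subst_X_plus_1 q"
    by (simp only: subst_X_plus_1_add subst_X_plus_1_mult subst_X_plus_1_X
        subst_X_plus_1_X_plus_1 subst_X_plus_1_const)
  have "pascal_step (subst_X_plus_1 f) = poly_shift 1 ([:1, 1:] * subst_X_plus_1 f + 1)"
    by (rule poly_eqI) (simp add: pascal_step_def coeff_poly_shift)
  also have "\<dots> = subst_X_plus_1 q" unfolding q' by simp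
  finally show ?thesis using False \<open>T_map f = q\<close> by (simp add: T_conj_def coeff_0_subst_X_plus_1)
qed

lemma funpow_T_map_eq_1_iff:
  "(T_map ^^ k) f = 1 \<longleftrightarrow> (T_conj ^^ k) (subst_X_plus_1 f) = 1"
proof -
  have "subst_X_plus_1 ((T_map ^^ k) f) = (T_conj ^^ k) (subst_X_plus_1 f)"
    by (induction k) (simp_all add: subst_X_plus_1_T_map)
  then show ?thesis by (metis subst_X_plus_1_eq_iff subst_X_plus_1_const(2))
qed

section \<open>Pascal's triangle modulo 2\<close>

lemma coeff_X_plus_1_mult: "coeff ([:1, 1:] * p) (Suc n) = coeff p n + coeff p (Suc n)"
  for p :: "'a::comm_semiring_1 poly"
  by (simp add: coeff_pCons add.commute)

definition pascal :: "'a::comm_ring_1 poly \<Rightarrow> nat \<Rightarrow> nat \<Rightarrow> 'a" where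
  "pascal g e c = coeff ([:1, 1:] ^ c * g) (e + c)"

lemma funpow_pascal_step: "(pascal_step ^^ c) h = poly_shift c ([:1, 1:] ^ c * h)"
proof (induction c)
  case 0
  show ?case by simp
next
  case (Suc c)
  show ?case
    by (rule poly_eqI)
       (simp add: Suc.IH coeff_pascal_step coeff_poly_shift coeff_X_plus_1_mult mult.assoc
         del: mult_pCons_left)
qed

lemma pascal_Suc_col: "pascal g e (Suc c) = pascal g e c + pascal g (Suc e) c"
  by (simp add: pascal_def coeff_X_plus_1_mult mult.assoc add.commute del: mult_pCons_left)

lemma pascal_Suc_row: "pascal g (Suc e) c = pascal g e c + pascal g e (Suc c)"
  for g :: "bit poly"
  by (simp only: pascal_Suc_col add.assoc[symmetric] bit_add_self add_0)

lemma degree_X_plus_1_power_mult: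
  "g \<noteq> 0 \<Longrightarrow> degree ([:1, 1:] ^ c * g) = c + degree g" for g :: "'a::idom poly"
  by (simp add: degree_mult_eq degree_linear_power)

lemma pascal_above_degree: "degree g < e \<Longrightarrow> pascal g e c = 0" for g :: "'a::idom poly"
  by (cases "g = 0") (simp_all add: pascal_def coeff_eq_0 degree_X_plus_1_power_mult)

lemma pascal_degree_row: "pascal g (degree g) c = lead_coeff g" for g :: "'a::idom poly"
proof -
  have "lead_coeff ([:1, 1:] ^ c :: 'a poly) = 1" by (simp add: lead_coeff_power)
  then show ?thesis using coeff_mult_degree_sum[of "[:1, 1:] ^ c" g]
    by (simp add: pascal_def degree_linear_power add.commute)
qed

lemma pascal_add_period:
  fixes g :: "bit poly"
  assumes "degree g < 2 ^ t"
  shows "pascal g e (c + 2 ^ t) = pascal g e c"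
proof -
  let ?h = "[:1, 1:] ^ c * g" and ?P = "2 ^ t :: nat"
  have "[:1, 1:] ^ (c + ?P) * g = (1 + monom 1 ?P) * ?h"
    by (simp only: power_add X_plus_1_power_two_power mult.commute mult.left_commute)
  then have "pascal g e (c + ?P) = coeff ((1 + monom 1 ?P) * ?h) (e + c + ?P)"
    by (simp only: pascal_def add.assoc)
  also have "\<dots> = coeff ?h (e + c + ?P) + coeff ?h (e + c)"
    by (simp add: distrib_right coeff_monom_mult)
  also have "coeff ?h (e + c + ?P) = 0"
    using assms by (cases "g = 0") (simp_all add: coeff_eq_0 degree_X_plus_1_power_mult)
  finally show ?thesis by (simp add: pascal_def)
qed

lemma pascal_mod_period:
  fixes g :: "bit poly"
  assumes "degree g < 2 ^ t"
  shows "pascal g e (c mod 2 ^ t) = pascal g e c"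
proof -
  have "pascal g e (r + 2 ^ t * q) = pascal g e r" for r q
  proof (induction q)
    case (Suc q)
    have "r + 2 ^ t * Suc q = (r + 2 ^ t * q) + 2 ^ t" by simp
    with Suc.IH show ?case by (simp only: pascal_add_period[OF assms])
  qed simp
  from this[of "c mod 2 ^ t" "c div 2 ^ t"] show ?thesis by simp
qed

section \<open>Runs of ones\<close>

lemma run_triangle:
  fixes \<phi> :: "nat \<Rightarrow> nat \<Rightarrow> bit"
  assumes rec: "\<And>r c. \<phi> (Suc r) c = \<phi> r c + \<phi> r (Suc c)"
    and run: "\<And>j. j < k \<Longrightarrow> \<phi> e (a + j) = 1"
    and "i + j < k"
  shows "\<phi> (e + i) (a + j) = (if i = 0 then 1 else 0)"
  using \<open>i + j < k\<close>
proof (induction i arbitrary: j)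
  case 0
  then show ?case using run by simp
next
  case (Suc i)
  have "\<phi> (e + Suc i) (a + j) = \<phi> (e + i) (a + j) + \<phi> (e + i) (a + Suc j)"
    using rec by simp
  also have "\<dots> = 0" using Suc.IH[of j] Suc.IH[of "Suc j"] Suc.prems by (simp add: bit_add_self)
  finally show ?case by simp
qed

lemma run_length_le:
  fixes \<phi> :: "nat \<Rightarrow> nat \<Rightarrow> bit"
  assumes rec: "\<And>r c. \<phi> (Suc r) c = \<phi> r c + \<phi> r (Suc c)"
    and top: "\<And>c. \<phi> d c = 1"
    and run: "\<And>j. j < k \<Longrightarrow> \<phi> e (a + j) = 1"
    and "e < d"
  shows "k \<le> d - e"
proof (rule ccontr)
  assume "\<not> k \<le> d - e"
  then have "\<phi> (e + (d - e)) (a + 0) = 0"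
    using run_triangle[OF rec run, where i = "d - e" and j = 0] \<open>e < d\<close> by simp
  then show False using top[of a] \<open>e < d\<close> by simp
qed

lemma double_sum_diff_lessThan: "2 * (\<Sum>i<k. k - i) = k * (k + 1)" for k :: nat
proof (induction k)
  case (Suc k)
  have "(\<Sum>i<Suc k. Suc k - i) = Suc k + (\<Sum>i<k. k - i)"
    by (simp only: sum.lessThan_Suc_shift) simp
  then show ?case using Suc.IH by simp
qed simp

lemma double_card_triangle: "2 * card {(i, j). i + j < (k::nat)} = k * (k + 1)"
proof -
  have "{(i, j). i + j < k} = (SIGMA i:{..<k}. {..<k - i})" by auto
  then show ?thesis using double_sum_diff_lessThan[of k] by (simp add: card_SigmaI)
qed

lemma add_mod_cancel_left_less:
  fixes a i j P :: nat
  assumes "(a + i) mod P = (a + j) mod P" "i < P" "j < P"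
  shows "i = j"
proof -
  have "P dvd j - i" if "i \<le> j" "(a + i) mod P = (a + j) mod P" for i j
    using that mod_eq_dvd_iff_nat[of "a + i" "a + j" P] by simp
  then show ?thesis using assms by (metis mod_nat_eqI nat_le_linear)
qed

lemma run_triangles_disjoint_mod:
  fixes \<phi> :: "nat \<Rightarrow> nat \<Rightarrow> bit"
  assumes rec: "\<And>r c. \<phi> (Suc r) c = \<phi> r c + \<phi> r (Suc c)"
    and periodic: "\<And>c. \<phi> e' (c mod P) = \<phi> e' c"
    and run: "\<And>j. j < k \<Longrightarrow> \<phi> e (a + j) = 1"
    and run': "\<And>j. j < k' \<Longrightarrow> \<phi> e' (a' + j) = 1"
    and "e < e'" "i + j < k" "i' + j' < k'" "e + j = e' + j'"
  shows "(a + i) mod P \<noteq> (a' + i') mod P"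
proof
  assume same_col: "(a + i) mod P = (a' + i') mod P"
  have "i + (e' - e) < k" "e + (e' - e) = e'" using assms(5-) by auto
  then have "\<phi> e' (a + i) = 0"
    using run_triangle[OF rec run, where i = "e' - e" and j = i] \<open>e < e'\<close> by auto
  moreover have "\<phi> e' (a' + i') = 1" using run' \<open>i' + j' < k'\<close> by simp
  moreover have "\<phi> e' (a + i) = \<phi> e' (a' + i')" by (metis periodic same_col)
  ultimately show False by simp
qed

lemma sum_run_triangles_le:
  fixes \<phi> :: "nat \<Rightarrow> nat \<Rightarrow> bit" and a k :: "nat \<Rightarrow> nat"
  assumes rec: "\<And>r c. \<phi> (Suc r) c = \<phi> r c + \<phi> r (Suc c)"
    and top: "\<And>c. \<phi> d c = 1"
    and periodic: "\<And>r c. \<phi> r (c mod P) = \<phi> r c"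
    and "d < P"
    and runs: "\<And>e j. e < d \<Longrightarrow> j < k e \<Longrightarrow> \<phi> e (a e + j) = 1"
  shows "(\<Sum>e<d. k e * (k e + 1)) \<le> 2 * (P * d)"
proof -
  \<comment> \<open>the run of row \<open>e\<close> with the triangle below it, columns taken modulo \<open>P\<close>\<close>
  define cells where
    "cells e = (\<lambda>(i, j). ((a e + i) mod P, e + j)) ` {(i, j). i + j < k e}" for e
  have k_le: "k e \<le> d - e" if "e < d" for e
    using run_length_le[OF rec top runs[OF that] that] .
  have finite_cells: "finite (cells e)" for e
  proof -
    have "{(i, j). i + j < k e} \<subseteq> {..<k e} \<times> {..<k e}" by auto
    then have "finite {(i, j). i + j < k e}" by (rule finite_subset) simp
    then show ?thesis unfolding cells_def by simp
  qed
  have card_cells: "2 * card (cells e) = k e * (k e + 1)" if "e < d" for e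
  proof -
    have "inj_on (\<lambda>(i, j). ((a e + i) mod P, e + j)) {(i, j). i + j < k e}"
      using k_le[OF that] \<open>d < P\<close> by (auto intro!: inj_onI dest: add_mod_cancel_left_less)
    then show ?thesis unfolding cells_def by (simp add: card_image double_card_triangle)
  qed
  have cells_sub: "cells e \<subseteq> {..<P} \<times> {..<d}" if "e < d" for e
    using k_le[OF that] \<open>d < P\<close> unfolding cells_def by auto
  have cells_disjoint: "cells e \<inter> cells e' = {}" if "e < e'" "e' < d" for e e'
  proof -
    have "e < d" using that by simp
    show ?thesis
      using run_triangles_disjoint_mod[OF rec periodic runs[OF \<open>e < d\<close>] runs[OF \<open>e' < d\<close>]
          \<open>e < e'\<close>]
      unfolding cells_def by fastforce
  qed
  have "(\<Sum>e<d. k e * (k e + 1)) = 2 * (\<Sum>e<d. card (cells e))"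
    unfolding sum_distrib_left by (rule sum.cong) (simp_all add: card_cells)
  also have "(\<Sum>e<d. card (cells e)) = card (\<Union>e<d. cells e)"
    by (rule card_UN_disjoint[symmetric])
       (use finite_cells cells_disjoint in \<open>auto simp: disjoint_iff, metis linorder_neqE_nat\<close>)
  also have "\<dots> \<le> card ({..<P} \<times> {..<d})"
    by (rule card_mono) (use cells_sub in auto)
  finally show ?thesis by simp
qed

section \<open>The orbit\<close>

lemma coeff_poly_shift_funpow_pascal_step:
  "coeff (poly_shift e ((pascal_step ^^ c) g)) i = pascal g (e + i) c"
  by (simp add: funpow_pascal_step coeff_poly_shift pascal_def add_ac)

lemma pascal_top_row: "(g :: bit poly) \<noteq> 0 \<Longrightarrow> pascal g (degree g) c = 1"
  by (simp add: pascal_degree_row bit_lead_coeff)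

lemma poly_shift_degree_funpow_pascal_step:
  "(g :: bit poly) \<noteq> 0 \<Longrightarrow> poly_shift (degree g) ((pascal_step ^^ c) g) = 1"
  by (rule poly_eqI)
     (simp add: coeff_poly_shift_funpow_pascal_step pascal_top_row pascal_above_degree coeff_1)

definition run :: "bit poly \<Rightarrow> nat \<Rightarrow> nat \<Rightarrow> nat" where
  "run g e c = (LEAST k. pascal g e (c + k) = 0)"

lemma pascal_less_run: "j < run g e c \<Longrightarrow> pascal g e (c + j) = 1"
  unfolding run_def using not_less_Least by fastforce

lemma pascal_run:
  assumes "g \<noteq> 0" "e < degree g"
  shows "pascal g e (c + run g e c) = 0"
proof -
  have "\<exists>k. pascal g e (c + k) = 0"
  proof (rule ccontr)
    assume "\<nexists>k. pascal g e (c + k) = 0"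
    then have ones: "pascal g e (c + j) = 1" if "j < Suc (degree g - e)" for j by simp
    have "Suc (degree g - e) \<le> degree g - e"
      by (rule run_length_le[where \<phi> = "pascal g" and a = c,
            OF pascal_Suc_row pascal_top_row[OF assms(1)] ones assms(2)])
    then show False by simp
  qed
  then show ?thesis unfolding run_def by (rule LeastI_ex)
qed

fun run_start :: "bit poly \<Rightarrow> nat \<Rightarrow> nat" where
  "run_start g 0 = 0"
| "run_start g (Suc e) = run_start g e + run g e (run_start g e)"

definition run_len :: "bit poly \<Rightarrow> nat \<Rightarrow> nat" where
  "run_len g e = run g e (run_start g e)"

lemma run_start_eq_sum: "run_start g e = (\<Sum>i<e. run_len g i)"
  by (induction e) (simp_all add: run_len_def)

lemma T_conj_poly_shift_funpow_pascal_step: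
  "T_conj (poly_shift e ((pascal_step ^^ c) g)) =
     (if pascal g e c = 1 then poly_shift e ((pascal_step ^^ Suc c) g)
      else poly_shift (Suc e) ((pascal_step ^^ c) g))"
proof -
  have "pascal_step (poly_shift e h) = poly_shift e (pascal_step h)" for h :: "bit poly"
    by (rule poly_eqI) (simp add: coeff_pascal_step coeff_poly_shift)
  moreover have "poly_shift 1 (poly_shift e h) = poly_shift (Suc e) h" for h :: "bit poly"
    by (rule poly_eqI) (simp add: coeff_poly_shift)
  ultimately show ?thesis
    by (auto simp: T_conj_def coeff_poly_shift_funpow_pascal_step)
qed

lemma funpow_T_conj_along_run:
  "i \<le> run g e c \<Longrightarrow>
     (T_conj ^^ i) (poly_shift e ((pascal_step ^^ c) g)) =
       poly_shift e ((pascal_step ^^ (c + i)) g)"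
proof (induction i)
  case (Suc i)
  then show ?case
    using pascal_less_run[of i g e c] by (simp add: T_conj_poly_shift_funpow_pascal_step)
qed simp

lemma funpow_T_conj_run_start:
  assumes "g \<noteq> 0"
  shows "e \<le> degree g \<Longrightarrow>
    (T_conj ^^ (run_start g e + e)) g = poly_shift e ((pascal_step ^^ run_start g e) g)"
proof (induction e)
  case (Suc e)
  let ?c = "run_start g e"
  have "run_start g (Suc e) + Suc e = Suc (run g e ?c + (?c + e))" by simp
  then have "(T_conj ^^ (run_start g (Suc e) + Suc e)) g
      = T_conj ((T_conj ^^ run g e ?c) ((T_conj ^^ (?c + e)) g))"
    by (simp only: funpow.simps(2) funpow_add comp_apply)
  also have "\<dots> = T_conj (poly_shift e ((pascal_step ^^ (?c + run g e ?c)) g))"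
    using Suc by (simp add: funpow_T_conj_along_run)
  also have "\<dots> = poly_shift (Suc e) ((pascal_step ^^ run_start g (Suc e)) g)"
    using pascal_run[OF assms] Suc.prems by (simp add: T_conj_poly_shift_funpow_pascal_step)
  finally show ?case .
qed simp

lemma tau_le_run_start:
  assumes "f \<noteq> 0"
  shows "tau f \<le> run_start (subst_X_plus_1 f) (degree f) + degree f"
proof -
  let ?g = "subst_X_plus_1 f"
  have "?g \<noteq> 0" using assms by simp
  then have "(T_conj ^^ (run_start ?g (degree f) + degree f)) ?g = 1"
    using funpow_T_conj_run_start[of ?g "degree ?g"]
      poly_shift_degree_funpow_pascal_step[OF \<open>?g \<noteq> 0\<close>] by simp
  then show ?thesis unfolding tau_def funpow_T_map_eq_1_iff by (rule Least_le)
qed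

lemma run_len_le:
  assumes "g \<noteq> 0" "e < degree g"
  shows "run_len g e \<le> degree g - e"
  using run_length_le[OF pascal_Suc_row pascal_top_row[OF assms(1)] pascal_less_run assms(2)]
  unfolding run_len_def .

lemma sum_run_len_sq_le:
  assumes "g \<noteq> 0"
  shows "(\<Sum>e<degree g. run_len g e * (run_len g e + 1)) \<le> 4 * degree g ^ 2"
proof (cases "degree g = 0")
  case False
  then obtain t where t: "2 ^ t \<le> degree g" "degree g < 2 ^ Suc t"
    using ex_power_ivl1[of 2 "degree g"] by auto
  have "(\<Sum>e<degree g. run_len g e * (run_len g e + 1)) \<le> 2 * (2 ^ Suc t * degree g)"
    using sum_run_triangles_le[OF pascal_Suc_row pascal_top_row[OF assms] pascal_mod_period[OF t(2)]
        t(2) pascal_less_run] unfolding run_len_def .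
  also have "\<dots> \<le> 4 * degree g ^ 2" using t(1) by (simp add: power2_eq_square)
  finally show ?thesis .
qed simp

section \<open>The numerical estimate\<close>

lemma powr_three_halves: "0 \<le> x \<Longrightarrow> x powr 1.5 = x * sqrt x"
proof (cases "x = 0")
  case False
  assume "0 \<le> x"
  have "x powr 1.5 = x powr (1 + 1/2)" by simp
  also have "\<dots> = x powr 1 * x powr (1/2)" by (rule powr_add)
  also have "\<dots> = x * sqrt x" using False \<open>0 \<le> x\<close> by (simp add: powr_half_sqrt)
  finally show ?thesis .
qed simp

lemma sum_le_of_row_bounds_small:
  fixes k :: "nat \<Rightarrow> nat"
  assumes k_le: "\<And>e. e < d \<Longrightarrow> k e \<le> d - e" and "d \<le> 4"
  shows "real ((\<Sum>e<d. k e) + d) \<le> 2 * real d powr 1.5 + 1"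
proof -
  have "2 * (\<Sum>e<d. k e) \<le> d * (d + 1)"
    using sum_mono[of "{..<d}" k "\<lambda>e. d - e"] k_le double_sum_diff_lessThan[of d] by simp
  then have "2 * ((\<Sum>e<d. k e) + d) \<le> d * d + 3 * d" by simp
  then have "2 * real ((\<Sum>e<d. k e) + d) \<le> real d * real d + 3 * real d"
    using of_nat_mono[where 'a = real] by fastforce
  also have "\<dots> \<le> 2 * (real d * real d) + 2"
  proof -
    have "0 \<le> (real d - 1) * (real d - 2)"
      by (cases "d \<le> 1") (auto intro: mult_nonpos_nonpos mult_nonneg_nonneg)
    then show ?thesis by (simp add: algebra_simps)
  qed
  also have "real d * real d \<le> 2 * real d powr 1.5"
  proof -
    have "real d / 2 \<le> sqrt (real d)"
    proof (rule real_le_rsqrt)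
      have "real d * real d \<le> real d * 4" by (rule mult_left_mono) (use \<open>d \<le> 4\<close> in simp_all)
      then show "(real d / 2)\<^sup>2 \<le> real d" by (simp add: power2_eq_square)
    qed
    then have "real d * real d \<le> real d * (2 * sqrt (real d))" by (intro mult_left_mono) simp_all
    then show ?thesis using powr_three_halves[of "real d"] by simp
  qed
  finally show ?thesis by simp
qed

text \<open>\<open>row_max a l\<close> is the maximum of \<open>2 a k - k (k + 1)\<close> over \<open>k \<le> l\<close>, attained at
  \<open>k = min l a\<close>.\<close>

definition row_max :: "nat \<Rightarrow> nat \<Rightarrow> int" where
  "row_max a l = (if l < a then int l * (2 * int a - int l - 1) else int a * (int a - 1))"

lemma row_value_le_row_max:
  assumes "k \<le> l"
  shows "2 * int a * int k - int k * (int k + 1) \<le> row_max a l"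
proof (cases "l < a")
  case True
  have "0 \<le> (int l - int k) * (2 * int a - int l - int k - 1)"
    using True assms by (intro mult_nonneg_nonneg) auto
  then show ?thesis using True by (simp add: row_max_def algebra_simps)
next
  case False
  have "0 \<le> (int k - int a) * (int k - int a + 1)"
    by (cases "a \<le> k") (auto intro: mult_nonneg_nonneg mult_nonpos_nonpos)
  then show ?thesis using False by (simp add: row_max_def algebra_simps)
qed

lemma sum_row_max:
  assumes "1 \<le> a"
  shows "3 * (\<Sum>l<n. row_max a (l + 1)) =
    (if n < a then int n * (int n + 1) * (3 * int a - int n - 2)
     else int a * (int a - 1) * (3 * int n + 2 - int a))"
proof (induction n)
  case (Suc n)
  consider "Suc n < a" | "Suc n = a" | "a < Suc n" by linarith
  then show ?case using Suc.IH assms by cases (auto simp: row_max_def algebra_simps)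
qed simp

lemma lagrange_row_bound:
  fixes k :: "nat \<Rightarrow> nat"
  assumes k_le: "\<And>e. e < d \<Longrightarrow> k e \<le> d - e" and "1 \<le> a" "a \<le> d + 1"
  shows "6 * int a * int (\<Sum>e<d. k e)
    \<le> int a * (int a - 1) * (3 * int d + 2 - int a) + 3 * int (\<Sum>e<d. k e * (k e + 1))"
proof -
  have "(\<Sum>e<d. 2 * int a * int (k e) - int (k e) * (int (k e) + 1)) \<le> (\<Sum>e<d. row_max a (d - e))"
    by (rule sum_mono) (simp add: k_le row_value_le_row_max)
  also have "\<dots> = (\<Sum>e<d. row_max a (d - Suc e + 1))"
    by (rule sum.cong) (simp_all add: Suc_diff_Suc)
  also have "\<dots> = (\<Sum>l<d. row_max a (l + 1))"
    by (rule sum.nat_diff_reindex)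
  finally have rows: "2 * int a * int (\<Sum>e<d. k e) - int (\<Sum>e<d. k e * (k e + 1))
      \<le> (\<Sum>l<d. row_max a (l + 1))"
    by (simp add: sum_subtractf sum_distrib_left algebra_simps)
  have "3 * (\<Sum>l<d. row_max a (l + 1)) = int a * (int a - 1) * (3 * int d + 2 - int a)"
  proof (cases "d < a")
    case True
    then have "int a = int d + 1" using \<open>a \<le> d + 1\<close> by simp
    then show ?thesis using sum_row_max[OF \<open>1 \<le> a\<close>, of d] True by (simp add: algebra_simps)
  qed (use sum_row_max[OF \<open>1 \<le> a\<close>, of d] in simp)
  with rows show ?thesis by linarith
qed

lemma multiplier_estimate:
  fixes a s :: real
  assumes "0 \<le> s" "1 \<le> a - 2 * s" "a - 2 * s \<le> 2"
  shows "a * (a - 1) * (3 * s^2 + 2 - a) + 12 * s^4 \<le> 6 * a * (2 * s^3 + 1 - s^2)"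
proof -
  define t where "t = a - 2 * s"
  then have a: "a = 2 * s + t" by simp
  have "6 * a * (2 * s^3 + 1 - s^2) - a * (a - 1) * (3 * s^2 + 2 - a) - 12 * s^4
      = 2 * s * ((s - 3/2)^2 + 11/4) + 3 * (t - 1) * (2 - t) * s^2 + 6 * (t - 1)^2 * s
        + t * ((t - 3/2)^2 + 23/4)"
    unfolding a by (simp add: algebra_simps power2_eq_square power3_eq_cube power4_eq_xxxx)
  moreover have "0 \<le> 2 * s * ((s - 3/2)^2 + 11/4)" using \<open>0 \<le> s\<close> by simp
  moreover have "0 \<le> 3 * (t - 1) * (2 - t) * s^2" using assms t_def by simp
  moreover have "0 \<le> 6 * (t - 1)^2 * s" using \<open>0 \<le> s\<close> by simp
  moreover have "0 \<le> t * ((t - 3/2)^2 + 23/4)" using assms t_def by simp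
  ultimately show ?thesis by linarith
qed

lemma sum_le_of_row_bounds_large:
  fixes k :: "nat \<Rightarrow> nat"
  assumes k_le: "\<And>e. e < d \<Longrightarrow> k e \<le> d - e"
    and sq: "(\<Sum>e<d. k e * (k e + 1)) \<le> 4 * d ^ 2" and "5 \<le> d"
  shows "real ((\<Sum>e<d. k e) + d) \<le> 2 * real d powr 1.5 + 1"
proof -
  define S where "S = (\<Sum>e<d. k e)"
  define s where "s = sqrt (real d)"
  \<comment> \<open>\<open>a \<approx> 2 s\<close> balances \<open>2 d\<^sup>2 / a\<close> against \<open>a d / 2\<close>; \<open>a \<le> d + 1\<close> needs \<open>5 \<le> d\<close>\<close>
  define a where "a = nat \<lfloor>2 * s\<rfloor> + 2"
  have "0 \<le> s" and s2: "s\<^sup>2 = real d" unfolding s_def by simp_all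
  have a_real: "real a = of_int \<lfloor>2 * s\<rfloor> + 2" unfolding a_def using \<open>0 \<le> s\<close> by simp
  then have t: "1 \<le> real a - 2 * s" "real a - 2 * s \<le> 2" by linarith+
  have "(2 * s)\<^sup>2 < (real d)\<^sup>2"
    using s2 \<open>5 \<le> d\<close> by (simp add: power2_eq_square power_mult_distrib)
  then have "2 * s < real d" by (rule power_less_imp_less_base) simp
  then have "real a < real (d + 2)" using a_real by linarith
  then have "1 \<le> a" "a \<le> d + 1" unfolding a_def by simp_all
  have "int (\<Sum>e<d. k e * (k e + 1)) \<le> int (4 * d ^ 2)" using sq by (simp only: of_nat_le_iff)
  then have "6 * int a * int S \<le> int a * (int a - 1) * (3 * int d + 2 - int a) + 12 * int d ^ 2"
    using lagrange_row_bound[where d = d and k = k, OF k_le \<open>1 \<le> a\<close> \<open>a \<le> d + 1\<close>]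
    unfolding S_def by simp
  then have "6 * real a * real S
      \<le> real a * (real a - 1) * (3 * real d + 2 - real a) + 12 * real d ^ 2"
    using of_int_le_iff[where 'a = real, THEN iffD2] by fastforce
  also have "\<dots> = real a * (real a - 1) * (3 * s\<^sup>2 + 2 - real a) + 12 * s ^ 4"
    by (simp flip: s2 power_mult)
  also have "\<dots> \<le> 6 * real a * (2 * s ^ 3 + 1 - s\<^sup>2)" by (rule multiplier_estimate[OF \<open>0 \<le> s\<close> t])
  finally have "real S \<le> 2 * s ^ 3 + 1 - real d" using \<open>1 \<le> a\<close> s2 by simp
  moreover have "real d powr 1.5 = s ^ 3"
    using powr_three_halves[of "real d"] s2 by (simp add: s_def power3_eq_cube)
  ultimately show ?thesis unfolding S_def by simp
qed

lemma sum_le_of_row_bounds: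
  fixes k :: "nat \<Rightarrow> nat"
  assumes "\<And>e. e < d \<Longrightarrow> k e \<le> d - e" and "(\<Sum>e<d. k e * (k e + 1)) \<le> 4 * d ^ 2"
  shows "real ((\<Sum>e<d. k e) + d) \<le> 2 * real d powr 1.5 + 1"
proof (cases "d \<le> 4")
  case True
  then show ?thesis using sum_le_of_row_bounds_small assms(1) by blast
next
  case False
  then show ?thesis using sum_le_of_row_bounds_large assms by simp
qed

theorem theorem3p5:
  fixes f :: "bit poly"
  assumes "f \<noteq> 0"
  shows "real (tau f) \<le> 2 * real (degree f) powr 1.5 + 1"
proof -
  let ?g = "subst_X_plus_1 f"
  have "?g \<noteq> 0" using assms by simp
  have "tau f \<le> (\<Sum>e<degree f. run_len ?g e) + degree f"
    using tau_le_run_start[OF assms] by (simp add: run_start_eq_sum)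
  moreover have "real ((\<Sum>e<degree f. run_len ?g e) + degree f) \<le> 2 * real (degree f) powr 1.5 + 1"
    using run_len_le[OF \<open>?g \<noteq> 0\<close>] sum_run_len_sq_le[OF \<open>?g \<noteq> 0\<close>]
    by (intro sum_le_of_row_bounds) simp_all
  ultimately show ?thesis by (meson of_nat_le_iff order_trans)
qed

end
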